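(* Let $f:2^N\to\mathbb R$ be a monotone submodular function with curvature $c$, and let $\mathcal D$ be a product distribution on $2^N$ with bounded marginals. Then \textsc{MaxMargCont} is a $((1-c)^2-o(1))$-OPS algorithm: given a sufficiently large polynomial number of samples $(S_j,f(S_j))$ with $S_j$ i.i.d. from $\mathcal D$, with probability at least $1-\delta$ ($\delta\in[0,1)$ a constant) it returns a set $S$ with $|S|=k$ and $f(S)\ge((1-c)^2-o(1))\max_{T:|T|\le k}f(T)$.
   Context: $N=\{e_1,\dots,e_n\}$. $f_S(e)=f(S\cup\{e\})-f(S)$; $f$ is monotone if $f_S(e)\ge0$ and submodular if $f_S(e)\ge f_T(e)$ for all $S\subseteq T$. The curvature of $f$ is $c=1-\min_{e\in N,S\subseteq N}f_{S\setminus\{e\}}(e)/f(\{e\})$. A product distribution includes each element independently; it has bounded marginals if for every $e$, both $\Pr[e\in S]$ and $\Pr[e\notin S]$ ($S\sim\mathcal D$) lie between $1/\mathrm{poly}(n)$ and $1-1/\mathrm{poly}(n)$. \textsc{MaxMargCont}: for each $i$, let $\mathcal S_i$ (resp. $\mathcal S_{-i}$) be the samples containing (resp. not containing) $e_i$, compute $\hat v_i=\frac{1}{|\mathcal S_i|}\sum_{S\in\mathcal S_i}f(S)-\frac{1}{|\mathcal S_{-i}|}\sum_{S\in\mathcal S_{-i}}f(S)$, and return $\arg\max_{|T|=k}\sum_{e_i\in T}\hat v_i$. *)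

theory Defs
  imports "HOL-Probability.Probability"
begin

(* Ground set N = {e_1,...,e_n} is rendered as {0..<n}; f :: nat set => real is
   considered on subsets of {0..<n}. *)

definition monotone_set_fun :: "nat \<Rightarrow> (nat set \<Rightarrow> real) \<Rightarrow> bool" where
  "monotone_set_fun n f \<longleftrightarrow>
     (\<forall>S T. S \<subseteq> T \<and> T \<subseteq> {0..<n} \<longrightarrow> f S \<le> f T)"

definition marg :: "(nat set \<Rightarrow> real) \<Rightarrow> nat set \<Rightarrow> nat \<Rightarrow> real" where
  "marg f S e = f (S \<union> {e}) - f S"

definition submodular_set_fun :: "nat \<Rightarrow> (nat set \<Rightarrow> real) \<Rightarrow> bool" where
  "submodular_set_fun n f \<longleftrightarrow>
     (\<forall>S T e. S \<subseteq> T \<and> T \<subseteq> {0..<n} \<and> e \<in> {0..<n} \<longrightarrow> marg f S e \<ge> marg f T e)"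

(* curvature c = 1 - min_{e \<in> N, S \<subseteq> N} f_{S-{e}}(e) / f({e})
   (Isabelle convention x / 0 = 0 if some f({e}) = 0) *)
definition curvature :: "nat \<Rightarrow> (nat set \<Rightarrow> real) \<Rightarrow> real" where
  "curvature n f = 1 - Min {marg f (S - {e}) e / f {e} | e S. e \<in> {0..<n} \<and> S \<subseteq> {0..<n}}"

definition prod_dist :: "nat \<Rightarrow> (nat \<Rightarrow> real) \<Rightarrow> nat set pmf" where
  "prod_dist n p = map_pmf (\<lambda>x. {i \<in> {0..<n}. x i}) (Pi_pmf {0..<n} False (\<lambda>i. bernoulli_pmf (p i)))"

definition samples_pmf :: "nat \<Rightarrow> nat set pmf \<Rightarrow> (nat \<Rightarrow> nat set) pmf" where
  "samples_pmf m D = Pi_pmf {0..<m} {} (\<lambda>_. D)"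

definition avg_over :: "(nat \<Rightarrow> real) \<Rightarrow> nat set \<Rightarrow> real" where
  "avg_over g J = (\<Sum>j\<in>J. g j) / real (card J)"

definition mmc_estimate :: "nat \<Rightarrow> (nat \<Rightarrow> nat set) \<Rightarrow> (nat set \<Rightarrow> real) \<Rightarrow> nat \<Rightarrow> real" where
  "mmc_estimate m Ss f i =
     avg_over (\<lambda>j. f (Ss j)) {j \<in> {0..<m}. i \<in> Ss j}
   - avg_over (\<lambda>j. f (Ss j)) {j \<in> {0..<m}. i \<notin> Ss j}"

(* the possible outputs of MaxMargCont: all argmax_{|T|=k} \<Sum>_{e_i \<in> T} hat v_i
   (any tie-breaking) *)
definition mmc_outputs :: "nat \<Rightarrow> nat \<Rightarrow> nat \<Rightarrow> (nat \<Rightarrow> nat set) \<Rightarrow> (nat set \<Rightarrow> real) \<Rightarrow> nat set set" where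
  "mmc_outputs n k m Ss f =
     {T. T \<subseteq> {0..<n} \<and> card T = k \<and>
        (\<forall>T'. T' \<subseteq> {0..<n} \<and> card T' = k \<longrightarrow>
              (\<Sum>i\<in>T'. mmc_estimate m Ss f i) \<le> (\<Sum>i\<in>T. mmc_estimate m Ss f i))}"

definition opt_val :: "nat \<Rightarrow> nat \<Rightarrow> (nat set \<Rightarrow> real) \<Rightarrow> real" where
  "opt_val n k f = Max (f ` {T. T \<subseteq> {0..<n} \<and> card T \<le> k})"

end

theory Submission
  imports Defs
begin

text \<open>
  For \<open>S\<close> drawn from the product distribution let
  \<open>v\<^sub>i = E[f S | e\<^sub>i \<in> S] - E[f S | e\<^sub>i \<notin> S]\<close>. By independence of the coordinates this is an
  average of marginal contributions \<open>f\<^sub>S(e\<^sub>i)\<close> with \<open>e\<^sub>i \<notin> S\<close>, so curvature and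
  submodularity give \<open>(1 - c) f {e\<^sub>i} \<le> v\<^sub>i \<le> f {e\<^sub>i}\<close>. Hence a \<open>k\<close>-set \<open>T\<close> maximising
  \<open>\<Sum> v\<close> is a \<open>(1 - c)\<^sup>2\<close>-approximation: for an optimal set \<open>O\<close> (padded to \<open>k\<close> elements),
  \<open>(1 - c) f O \<le> (1 - c) \<Sum>\<^sub>O f {e\<^sub>i} \<le> \<Sum>\<^sub>O v \<le> \<Sum>\<^sub>T v \<le> \<Sum>\<^sub>T f {e\<^sub>i} \<le> f T / (1 - c)\<close>.
  Since all marginals are at least \<open>n\<^sup>-\<^sup>a\<close>, a polynomial number of samples puts a
  polynomial fraction of them on either side of every \<open>e\<^sub>i\<close>, and Hoeffding's inequality then
  makes all estimates accurate to \<open>max\<^sub>i f {e\<^sub>i} / (2 n\<^sup>2)\<close> with high probability; the argmax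
  of the estimated sums loses only an additional \<open>opt / n\<close>.
\<close>

lemma exp_neg_le_inverse: "0 < (x::real) \<Longrightarrow> exp (- x) \<le> 1 / x"
proof -
  assume "0 < x"
  moreover have "x \<le> exp x"
    using exp_ge_add_one_self[of x] by linarith
  ultimately show ?thesis
    by (simp add: exp_minus field_simps)
qed

text \<open>Hoeffding's tail \<open>2 exp (- s\<^sup>2 / (2 m B\<^sup>2))\<close>, weakened by \<open>exp (- x) \<le> 1 / x\<close> to a
  polynomial bound, which is all the sample-size estimate needs.\<close>

lemma prob_iid_sum_deviation:
  fixes g :: "'a \<Rightarrow> real"
  assumes m: "0 < m" and B: "0 < B" and bounded: "\<And>x. x \<in> set_pmf D \<Longrightarrow> \<bar>g x\<bar> \<le> B"
    and mean: "measure_pmf.expectation D g = 0" and s: "0 < s"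
  shows "measure_pmf.prob (Pi_pmf {0..<m} d (\<lambda>_. D)) {h. s \<le> \<bar>\<Sum>j\<in>{0..<m}. g (h j)\<bar>}
           \<le> 4 * real m * B\<^sup>2 / s\<^sup>2"
proof -
  let ?P = "Pi_pmf {0..<m} d (\<lambda>_. D)"
  have coordinate: "map_pmf (\<lambda>h. h j) ?P = D" if "j < m" for j
    using that by (subst Pi_pmf_component) auto
  have distr_coordinate: "distr ?P borel (\<lambda>h. g (h j)) = distr D borel g" if "j < m" for j
  proof -
    have "distr ?P borel (\<lambda>h. g (h j)) = distr (map_pmf (\<lambda>h. h j) ?P) borel g"
      unfolding map_pmf_rep_eq by (subst distr_distr) (auto simp: o_def)
    then show ?thesis using coordinate[OF that] by simp
  qed
  interpret Hoeffding_ineq_iid ?P "{0..<m}" "\<lambda>j h. g (h j)" "\<lambda>h. g (h 0)" "-B" B 0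
  proof unfold_locales
    show "prob_space.indep_vars ?P (\<lambda>_. borel) (\<lambda>j h. g (h j)) {0..<m}"
      by (intro prob_space.indep_vars_compose2[OF _ indep_vars_Pi_pmf])
         (auto simp: measure_pmf.prob_space_axioms)
    show "distr ?P borel (\<lambda>h. g (h j)) = distr ?P borel (\<lambda>h. g (h 0))" if "j \<in> {0..<m}" for j
      using that m by (simp add: distr_coordinate)
    show "AE h in ?P. g (h 0) \<in> {-B..B}"
      using bounded m by (force simp: AE_measure_pmf_iff set_Pi_pmf PiE_dflt_def abs_le_iff)
    show "0 \<equiv> measure_pmf.expectation ?P (\<lambda>h. g (h 0))"
      using integral_map_pmf[of "\<lambda>h. h 0" ?P g] coordinate[OF m] mean by simp
  qed auto
  have "measure_pmf.prob ?P {h. s \<le> \<bar>\<Sum>j\<in>{0..<m}. g (h j)\<bar>}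
          \<le> 2 * exp (- 2 * s\<^sup>2 / (real m * (B - - B)\<^sup>2))"
    using Hoeffding_ineq_abs_ge[of s] s B m by simp
  also have "\<dots> = 2 * exp (- (s\<^sup>2 / (2 * real m * B\<^sup>2)))"
    by (simp add: power2_eq_square field_simps)
  also have "\<dots> \<le> 2 * (1 / (s\<^sup>2 / (2 * real m * B\<^sup>2)))"
    using s B m by (intro mult_left_mono exp_neg_le_inverse) auto
  also have "\<dots> = 4 * real m * B\<^sup>2 / s\<^sup>2"
    by simp
  finally show ?thesis .
qed

lemma set_prod_dist: "S \<in> set_pmf (prod_dist n p) \<Longrightarrow> S \<subseteq> {0..<n}"
  by (auto simp: prod_dist_def)

lemma finite_set_prod_dist: "finite (set_pmf (prod_dist n p))"
  by (rule finite_subset[of _ "Pow {0..<n}"]) (auto dest: set_prod_dist)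

text \<open>The law of \<open>S \<sim> prod_dist n p\<close> conditioned on \<open>(i \<in> S) = b\<close>.\<close>

definition cond_prod_dist :: "nat \<Rightarrow> (nat \<Rightarrow> real) \<Rightarrow> nat \<Rightarrow> bool \<Rightarrow> nat set pmf" where
  "cond_prod_dist n p i b =
     map_pmf (\<lambda>h. {j \<in> {0..<n}. (h(i := b)) j})
       (Pi_pmf ({0..<n} - {i}) False (\<lambda>j. bernoulli_pmf (p j)))"

lemma prod_dist_bind_cond_prod_dist:
  assumes "i < n"
  shows "prod_dist n p = bernoulli_pmf (p i) \<bind> cond_prod_dist n p i"
proof -
  have "{0..<n} = insert i ({0..<n} - {i})"
    using assms by auto
  then have "Pi_pmf {0..<n} False (\<lambda>j. bernoulli_pmf (p j)) =
      do {b \<leftarrow> bernoulli_pmf (p i); h \<leftarrow> Pi_pmf ({0..<n} - {i}) False (\<lambda>j. bernoulli_pmf (p j));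
          return_pmf (h(i := b))}"
    by (subst (1) \<open>{0..<n} = _\<close>, intro Pi_pmf_insert') auto
  then show ?thesis
    unfolding prod_dist_def cond_prod_dist_def
    by (simp add: map_bind_pmf map_pmf_def bind_assoc_pmf bind_return_pmf)
qed

lemma set_cond_prod_dist:
  assumes "i < n" and "S \<in> set_pmf (cond_prod_dist n p i b)"
  shows "S \<subseteq> {0..<n}" and "i \<in> S \<longleftrightarrow> b"
  using assms by (auto simp: cond_prod_dist_def)

lemma finite_set_cond_prod_dist: "finite (set_pmf (cond_prod_dist n p i b))"
  by (rule finite_subset[of _ "Pow {0..<n}"]) (auto simp: cond_prod_dist_def)

lemma cond_prod_dist_False:
  "cond_prod_dist n p i False = map_pmf (\<lambda>S. S - {i}) (cond_prod_dist n p i True)"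
  unfolding cond_prod_dist_def pmf.map_comp by (intro map_pmf_cong) auto

lemma expectation_bind_bernoulli_pmf:
  fixes F :: "'a \<Rightarrow> real"
  assumes q: "0 \<le> q" "q \<le> 1" and fin: "\<And>b. finite (set_pmf (N b))"
  shows "measure_pmf.expectation (bernoulli_pmf q \<bind> N) F =
           q * measure_pmf.expectation (N True) F + (1 - q) * measure_pmf.expectation (N False) F"
proof -
  let ?A = "set_pmf (N True) \<union> set_pmf (N False)"
  have expectation_as_sum: "measure_pmf.expectation M F = (\<Sum>a\<in>?A. F a * pmf M a)"
    if "set_pmf M \<subseteq> ?A" for M
    using that fin by (intro integral_measure_pmf_real) auto
  have "set_pmf (bernoulli_pmf q \<bind> N) \<subseteq> ?A"
    by (auto simp: set_bind_pmf) (metis (full_types))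
  then have "measure_pmf.expectation (bernoulli_pmf q \<bind> N) F =
      (\<Sum>a\<in>?A. F a * (q * pmf (N True) a + (1 - q) * pmf (N False) a))"
    using q by (simp add: expectation_as_sum pmf_bind mult.commute)
  also have "\<dots> = q * (\<Sum>a\<in>?A. F a * pmf (N True) a) + (1 - q) * (\<Sum>a\<in>?A. F a * pmf (N False) a)"
    by (simp add: sum.distrib sum_distrib_left mult.left_commute distrib_left)
  also have "\<dots> = q * measure_pmf.expectation (N True) F + (1 - q) * measure_pmf.expectation (N False) F"
    by (simp add: expectation_as_sum)
  finally show ?thesis .
qed

lemma expectation_cond_prod_dist_if_mem:
  assumes "i < n"
  shows "measure_pmf.expectation (cond_prod_dist n p i b) (\<lambda>S. if i \<in> S then G S else H S)
           = measure_pmf.expectation (cond_prod_dist n p i b) (if b then G else H)"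
  using set_cond_prod_dist(2)[OF assms]
  by (intro integral_cong_AE) (auto simp: AE_measure_pmf_iff)

lemma expectation_prod_dist_if_mem:
  fixes F :: "nat set \<Rightarrow> real"
  assumes i: "i < n" and p: "0 \<le> p i" "p i \<le> 1"
  shows "measure_pmf.expectation (prod_dist n p) (\<lambda>S. if i \<in> S then F S else 0)
           = p i * measure_pmf.expectation (cond_prod_dist n p i True) F"
    and "measure_pmf.expectation (prod_dist n p) (\<lambda>S. if i \<in> S then 0 else F S)
           = (1 - p i) * measure_pmf.expectation (cond_prod_dist n p i False) F"
  unfolding prod_dist_bind_cond_prod_dist[OF i]
  by (simp_all add: expectation_bind_bernoulli_pmf[OF p] finite_set_cond_prod_dist
      expectation_cond_prod_dist_if_mem[OF i, of _ _ F "\<lambda>_. 0"]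
      expectation_cond_prod_dist_if_mem[OF i, of _ _ "\<lambda>_. 0" F])

lemma expectation_prod_dist_centred:
  fixes F :: "nat set \<Rightarrow> real"
  assumes i: "i < n" and p: "0 \<le> p i" "p i \<le> 1"
  shows "measure_pmf.expectation (prod_dist n p)
           (\<lambda>S. if i \<in> S then F S - measure_pmf.expectation (cond_prod_dist n p i True) F else 0) = 0"
    and "measure_pmf.expectation (prod_dist n p)
           (\<lambda>S. if i \<in> S then 0 else F S - measure_pmf.expectation (cond_prod_dist n p i False) F) = 0"
    and "measure_pmf.expectation (prod_dist n p) (\<lambda>S. of_bool (i \<in> S) - p i) = 0"
proof -
  have integrable: "integrable (cond_prod_dist n p i b) G" for b and G :: "nat set \<Rightarrow> real"
    by (simp add: integrable_measure_pmf_finite finite_set_cond_prod_dist)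
  show "measure_pmf.expectation (prod_dist n p)
      (\<lambda>S. if i \<in> S then F S - measure_pmf.expectation (cond_prod_dist n p i True) F else 0) = 0"
    and "measure_pmf.expectation (prod_dist n p)
      (\<lambda>S. if i \<in> S then 0 else F S - measure_pmf.expectation (cond_prod_dist n p i False) F) = 0"
    by (simp_all add: expectation_prod_dist_if_mem[where p = p, OF i p] integrable)
  have "measure_pmf.expectation (prod_dist n p) (\<lambda>S. if i \<in> S then 1 else 0) = p i"
    using expectation_prod_dist_if_mem(1)[where p = p, OF i p, of "\<lambda>_. 1"] by simp
  then show "measure_pmf.expectation (prod_dist n p) (\<lambda>S. of_bool (i \<in> S) - p i) = 0"
    by (simp add: of_bool_def integrable_measure_pmf_finite finite_set_prod_dist)
qed

lemma set_fun_nonneg: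
  assumes "f {} = 0" "monotone_set_fun n f" "S \<subseteq> {0..<n}"
  shows "0 \<le> f S"
  using assms unfolding monotone_set_fun_def by (metis empty_subsetI)

lemma marg_nonneg:
  assumes "monotone_set_fun n f" "S \<subseteq> {0..<n}" "e < n"
  shows "0 \<le> marg f S e"
  using assms unfolding monotone_set_fun_def marg_def by (simp add: subset_eq)

lemma marg_le_singleton:
  assumes "f {} = 0" "submodular_set_fun n f" "S \<subseteq> {0..<n}" "e < n"
  shows "marg f S e \<le> f {e}"
proof -
  have "marg f S e \<le> marg f {} e"
    using assms(2-4) unfolding submodular_set_fun_def
    by (auto dest!: spec[where x = "{}"] spec[where x = S] spec[where x = e])
  then show ?thesis
    using assms(1) by (simp add: marg_def)
qed

lemma set_fun_le_sum_singletons: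
  assumes f0: "f {} = 0" and sm: "submodular_set_fun n f" and S: "S \<subseteq> {0..<n}"
  shows "f S \<le> (\<Sum>i\<in>S. f {i})"
proof -
  have "finite S"
    using S finite_subset by blast
  then show ?thesis
    using S
  proof (induction S rule: finite_induct)
    case (insert x F)
    then have "marg f F x \<le> f {x}"
      by (intro marg_le_singleton[OF f0 sm]) auto
    then show ?case
      using insert by (simp add: marg_def)
  qed (simp add: f0)
qed

lemma curvature_eq_Min:
  "curvature n f = 1 - Min ((\<lambda>(e, S). marg f (S - {e}) e / f {e}) ` ({0..<n} \<times> Pow {0..<n}))"
  unfolding curvature_def by (rule arg_cong[where f = "\<lambda>X. 1 - Min X"]) force

lemma curvature_nonneg:
  assumes "f {} = 0" and "0 < n"
  shows "0 \<le> curvature n f"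
proof -
  have "Min ((\<lambda>(e, S). marg f (S - {e}) e / f {e}) ` ({0..<n} \<times> Pow {0..<n})) \<le> marg f {} 0 / f {0}"
    using assms by (intro Min_le) force+
  also have "\<dots> \<le> 1"
    using assms by (simp add: marg_def)
  finally show ?thesis
    by (simp add: curvature_eq_Min)
qed

lemma curvature_le_one:
  assumes "f {} = 0" and "monotone_set_fun n f" and "0 < n"
  shows "curvature n f \<le> 1"
proof -
  have "0 \<le> marg f (S - {e}) e / f {e}" if "e < n" "S \<subseteq> {0..<n}" for e S
  proof -
    have "S - {e} \<subseteq> {0..<n}"
      using that by auto
    then show ?thesis
      using that assms set_fun_nonneg[of f n "{e}"] marg_nonneg[of n f "S - {e}" e] by simp
  qed
  then have "0 \<le> Min ((\<lambda>(e, S). marg f (S - {e}) e / f {e}) ` ({0..<n} \<times> Pow {0..<n}))"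
    using assms by (subst Min_ge_iff) auto
  then show ?thesis
    by (simp add: curvature_eq_Min)
qed

lemma curvature_le_marg:
  assumes f0: "f {} = 0" and mo: "monotone_set_fun n f" and e: "e < n" and S: "S \<subseteq> {0..<n}"
  shows "(1 - curvature n f) * f {e} \<le> marg f (S - {e}) e"
proof (cases "f {e} = 0")
  case True
  then show ?thesis
    using marg_nonneg[OF mo _ e, of "S - {e}"] S by auto
next
  case False
  then have "0 < f {e}"
    using set_fun_nonneg[OF f0 mo, of "{e}"] e by simp
  moreover have "1 - curvature n f \<le> marg f (S - {e}) e / f {e}"
    unfolding curvature_eq_Min using e S by (simp, intro Min_le) force+
  ultimately show ?thesis
    by (simp add: le_divide_eq)
qed

lemma curvature_sum_singletons_le:
  assumes f0: "f {} = 0" and mo: "monotone_set_fun n f" and T: "T \<subseteq> {0..<n}"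
  shows "(1 - curvature n f) * (\<Sum>i\<in>T. f {i}) \<le> f T"
proof -
  have "finite T"
    using T finite_subset by blast
  then show ?thesis
    using T
  proof (induction T rule: finite_induct)
    case (insert x F)
    have "(1 - curvature n f) * f {x} \<le> marg f (insert x F - {x}) x"
      using insert by (intro curvature_le_marg[OF f0 mo]) auto
    also have "insert x F - {x} = F"
      using insert by auto
    finally show ?case
      using insert by (simp add: marg_def distrib_left)
  qed (simp add: f0)
qed

definition expected_marginal :: "nat \<Rightarrow> (nat \<Rightarrow> real) \<Rightarrow> (nat set \<Rightarrow> real) \<Rightarrow> nat \<Rightarrow> real" where
  "expected_marginal n p f i =
     measure_pmf.expectation (cond_prod_dist n p i True) f
   - measure_pmf.expectation (cond_prod_dist n p i False) f"

lemma expected_marginal_eq: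
  assumes "i < n"
  shows "expected_marginal n p f i =
           measure_pmf.expectation (cond_prod_dist n p i True) (\<lambda>S. marg f (S - {i}) i)"
proof -
  have "expected_marginal n p f i =
      measure_pmf.expectation (cond_prod_dist n p i True) (\<lambda>S. f S - f (S - {i}))"
    unfolding expected_marginal_def cond_prod_dist_False
    by (simp add: integrable_measure_pmf_finite finite_set_cond_prod_dist)
  also have "\<dots> = measure_pmf.expectation (cond_prod_dist n p i True) (\<lambda>S. marg f (S - {i}) i)"
    using set_cond_prod_dist(2)[OF assms]
    by (intro integral_cong_AE) (auto simp: AE_measure_pmf_iff marg_def insert_absorb)
  finally show ?thesis .
qed

lemma expected_marginal_bounds:
  assumes f0: "f {} = 0" and mo: "monotone_set_fun n f" and sm: "submodular_set_fun n f"
    and i: "i < n"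
  shows "(1 - curvature n f) * f {i} \<le> expected_marginal n p f i"
    and "expected_marginal n p f i \<le> f {i}"
proof -
  let ?C = "cond_prod_dist n p i True"
  have "(1 - curvature n f) * f {i} \<le> marg f (S - {i}) i" and "marg f (S - {i}) i \<le> f {i}"
    if "S \<in> set_pmf ?C" for S
    using set_cond_prod_dist(1)[OF i that]
    by (auto intro!: curvature_le_marg[OF f0 mo i] marg_le_singleton[OF f0 sm _ i])
  moreover have "integrable ?C (\<lambda>S. marg f (S - {i}) i)"
    by (simp add: integrable_measure_pmf_finite finite_set_cond_prod_dist)
  ultimately show "(1 - curvature n f) * f {i} \<le> expected_marginal n p f i"
    and "expected_marginal n p f i \<le> f {i}"
    unfolding expected_marginal_eq[OF i]
    by (auto intro!: measure_pmf.integral_ge_const measure_pmf.integral_le_const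
        simp: AE_measure_pmf_iff)
qed

lemma sum_le_sum_of_perturbed_argmax:
  fixes v w :: "'a \<Rightarrow> real"
  assumes "finite T" "finite T'" "card T' = card T"
    and close: "\<And>i. i \<in> T \<union> T' \<Longrightarrow> \<bar>w i - v i\<bar> \<le> \<eta>"
    and argmax: "(\<Sum>i\<in>T'. w i) \<le> (\<Sum>i\<in>T. w i)"
  shows "(\<Sum>i\<in>T'. v i) \<le> (\<Sum>i\<in>T. v i) + 2 * real (card T) * \<eta>"
proof -
  have sum_close: "\<bar>(\<Sum>i\<in>A. w i) - (\<Sum>i\<in>A. v i)\<bar> \<le> real (card A) * \<eta>" if "A \<subseteq> T \<union> T'" for A
  proof -
    have "\<bar>(\<Sum>i\<in>A. w i) - (\<Sum>i\<in>A. v i)\<bar> \<le> (\<Sum>i\<in>A. \<bar>w i - v i\<bar>)"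
      by (simp add: sum_subtractf[symmetric] sum_abs)
    also have "\<dots> \<le> (\<Sum>i\<in>A. \<eta>)"
      using that close by (intro sum_mono) auto
    finally show ?thesis
      by simp
  qed
  show ?thesis
    using sum_close[of T] sum_close[of T'] argmax assms(3) by (simp add: abs_le_iff)
qed

lemma finite_bounded_card_subsets: "finite {T. T \<subseteq> {0..<n::nat} \<and> card T \<le> k}"
  by (rule finite_subset[of _ "Pow {0..<n}"]) auto

lemma opt_val_attained:
  assumes "k \<le> n"
  obtains T where "T \<subseteq> {0..<n}" "card T \<le> k" "f T = opt_val n k f"
proof -
  have "opt_val n k f \<in> f ` {T. T \<subseteq> {0..<n} \<and> card T \<le> k}"
    unfolding opt_val_def
  proof (rule Max_in)
    have "{} \<in> {T. T \<subseteq> {0..<n} \<and> card T \<le> k}"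
      by simp
    then show "f ` {T. T \<subseteq> {0..<n} \<and> card T \<le> k} \<noteq> {}"
      by (metis empty_iff image_is_empty)
  qed (simp add: finite_bounded_card_subsets)
  then show ?thesis
    using that by (auto simp: image_iff)
qed

lemma le_opt_val:
  assumes "T \<subseteq> {0..<n}" "card T \<le> k"
  shows "f T \<le> opt_val n k f"
  unfolding opt_val_def using assms finite_bounded_card_subsets by (intro Max_ge) simp_all

lemma perturbed_argmax_approx:
  fixes f :: "nat set \<Rightarrow> real"
  assumes f0: "f {} = 0" and mo: "monotone_set_fun n f" and sm: "submodular_set_fun n f"
    and k: "0 < k" "k \<le> n"
    and v: "\<And>i. i < n \<Longrightarrow> (1 - curvature n f) * f {i} \<le> v i \<and> v i \<le> f {i}"
    and w: "\<And>i. i < n \<Longrightarrow> \<bar>w i - v i\<bar> \<le> \<eta>"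
    and T: "T \<subseteq> {0..<n}" "card T = k"
    and argmax: "\<And>T'. T' \<subseteq> {0..<n} \<Longrightarrow> card T' = k \<Longrightarrow> (\<Sum>i\<in>T'. w i) \<le> (\<Sum>i\<in>T. w i)"
  shows "(1 - curvature n f)\<^sup>2 * opt_val n k f - 2 * real k * \<eta> \<le> f T"
proof -
  define c' where "c' = 1 - curvature n f"
  have c': "0 \<le> c'" "c' \<le> 1"
    using k curvature_nonneg[of f n] curvature_le_one[OF f0 mo] f0 by (auto simp: c'_def)
  have v_nonneg: "0 \<le> v i" if "i < n" for i
  proof -
    have "0 \<le> c' * f {i}"
      using c' set_fun_nonneg[OF f0 mo, of "{i}"] that by simp
    then show ?thesis
      using v[OF that] by (simp add: c'_def)
  qed
  obtain Topt where Topt: "Topt \<subseteq> {0..<n}" "card Topt \<le> k" "f Topt = opt_val n k f"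
    using opt_val_attained[OF k(2)] .
  obtain T' where T': "Topt \<subseteq> T'" "T' \<subseteq> {0..<n}" "card T' = k"
    using exists_subset_between[OF Topt(2) _ Topt(1)] k by auto
  have fin: "finite Topt" "finite T'" "finite T"
    using Topt(1) T'(2) T(1) by (auto intro: finite_subset)
  have "c' * opt_val n k f \<le> c' * (\<Sum>i\<in>Topt. f {i})"
    using Topt set_fun_le_sum_singletons[OF f0 sm Topt(1)] c' by (simp add: mult_left_mono)
  also have "\<dots> \<le> (\<Sum>i\<in>Topt. v i)"
    unfolding sum_distrib_left c'_def using Topt(1) v by (intro sum_mono) auto
  also have "\<dots> \<le> (\<Sum>i\<in>T'. v i)"
    using fin T' v_nonneg by (intro sum_mono2) auto
  also have "\<dots> \<le> (\<Sum>i\<in>T. v i) + 2 * real k * \<eta>"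
  proof -
    have "\<bar>w i - v i\<bar> \<le> \<eta>" if "i \<in> T \<union> T'" for i
      using that T(1) T'(2) w by auto
    then show ?thesis
      using sum_le_sum_of_perturbed_argmax[OF fin(3,2) _ _ argmax[OF T'(2,3)]] T(2) T'(3) by simp
  qed
  also have "\<dots> \<le> (\<Sum>i\<in>T. f {i}) + 2 * real k * \<eta>"
    using T(1) v by (simp add: sum_mono subset_eq)
  finally have "c' * (c' * opt_val n k f) \<le> c' * (\<Sum>i\<in>T. f {i}) + c' * (2 * real k * \<eta>)"
    using c' by (metis distrib_left mult_left_mono)
  moreover have "c' * (\<Sum>i\<in>T. f {i}) \<le> f T"
    unfolding c'_def by (rule curvature_sum_singletons_le[OF f0 mo T(1)])
  moreover have "c' * (2 * real k * \<eta>) \<le> 2 * real k * \<eta>"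
    using c' k w[of 0] by (intro mult_left_le_one_le) auto
  ultimately show ?thesis
    by (simp add: c'_def power2_eq_square)
qed

lemma avg_over_close:
  fixes x :: "nat \<Rightarrow> real"
  assumes J: "finite J" and c: "0 < c" "c \<le> real (card J)"
    and dev: "\<bar>(\<Sum>j\<in>J. x j) - \<mu> * real (card J)\<bar> \<le> c * e"
  shows "\<bar>avg_over x J - \<mu>\<bar> \<le> e"
proof -
  have card_pos: "0 < real (card J)"
    using c by linarith
  have "0 \<le> e"
    using dev c by (metis abs_ge_zero order_trans zero_le_mult_iff not_less)
  have "\<bar>avg_over x J - \<mu>\<bar> = \<bar>(\<Sum>j\<in>J. x j) - \<mu> * real (card J)\<bar> / real (card J)"
    using card_pos by (simp add: avg_over_def field_simps)
  also have "\<dots> \<le> c * e / c"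
    using dev c card_pos \<open>0 \<le> e\<close> by (intro frac_le) auto
  also have "\<dots> = e"
    using c by simp
  finally show ?thesis .
qed

lemma mmc_estimate_close:
  fixes f :: "nat set \<Rightarrow> real"
  assumes r: "0 < r" "r \<le> q" "q \<le> 1 - r"
    and in_dev: "\<bar>\<Sum>j\<in>{0..<m}. if i \<in> Ss j then f (Ss j) - \<mu>_in else 0\<bar> \<le> real m * t"
    and out_dev: "\<bar>\<Sum>j\<in>{0..<m}. if i \<in> Ss j then 0 else f (Ss j) - \<mu>_out\<bar> \<le> real m * t"
    and count_dev: "\<bar>\<Sum>j\<in>{0..<m}. of_bool (i \<in> Ss j) - q\<bar> \<le> real m * r / 2"
    and m: "0 < m"
  shows "\<bar>mmc_estimate m Ss f i - (\<mu>_in - \<mu>_out)\<bar> \<le> 4 * t / r"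
proof -
  define J1 where "J1 = {j \<in> {0..<m}. i \<in> Ss j}"
  define J0 where "J0 = {j \<in> {0..<m}. i \<notin> Ss j}"
  have fin: "finite J1" "finite J0"
    by (auto simp: J1_def J0_def)
  have "card J1 + card J0 = card (J1 \<union> J0)"
    using fin by (intro card_Un_disjoint[symmetric]) (auto simp: J1_def J0_def)
  also have "J1 \<union> J0 = {0..<m}"
    by (auto simp: J1_def J0_def)
  finally have card_sum: "real (card J1) + real (card J0) = real m"
    by (metis card_atLeastLessThan diff_zero of_nat_add)
  have "(\<Sum>j\<in>{0..<m}. of_bool (i \<in> Ss j) - q) = real (card J1) - real m * q"
    by (simp add: J1_def sum_subtractf sum.inter_filter[symmetric] of_bool_def)
  then have count: "\<bar>real (card J1) - real m * q\<bar> \<le> real m * r / 2"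
    using count_dev by simp
  have mr: "0 < real m * r / 2"
    using m r by simp
  have "real m * r \<le> real m * q" "real m * r \<le> real m * (1 - q)"
    using r by (simp_all add: mult_left_mono)
  then have card_J1: "real m * r / 2 \<le> real (card J1)" and card_J0: "real m * r / 2 \<le> real (card J0)"
    using abs_le_D1[OF count] abs_le_D2[OF count] card_sum
    by (simp_all add: right_diff_distrib)
  have "(\<Sum>j\<in>{0..<m}. if i \<in> Ss j then f (Ss j) - \<mu>_in else 0) = (\<Sum>j\<in>J1. f (Ss j)) - \<mu>_in * real (card J1)"
    by (simp add: J1_def sum.inter_filter[symmetric] sum_subtractf)
  then have avg1: "\<bar>avg_over (\<lambda>j. f (Ss j)) J1 - \<mu>_in\<bar> \<le> 2 * t / r"
    using in_dev r by (intro avg_over_close[OF fin(1) mr card_J1]) (simp add: field_simps)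
  have "(\<Sum>j\<in>{0..<m}. if i \<in> Ss j then 0 else f (Ss j) - \<mu>_out) = (\<Sum>j\<in>J0. f (Ss j) - \<mu>_out)"
    unfolding J0_def sum.inter_filter[OF finite_atLeastLessThan] by (intro sum.cong) auto
  also have "\<dots> = (\<Sum>j\<in>J0. f (Ss j)) - \<mu>_out * real (card J0)"
    by (simp add: sum_subtractf)
  finally have avg0: "\<bar>avg_over (\<lambda>j. f (Ss j)) J0 - \<mu>_out\<bar> \<le> 2 * t / r"
    using out_dev r by (intro avg_over_close[OF fin(2) mr card_J0]) (simp add: field_simps)
  show ?thesis
    using avg1 avg0 unfolding mmc_estimate_def J1_def[symmetric] J0_def[symmetric]
    by (simp add: abs_le_iff)
qed

lemma prob_mmc_estimate_far:
  fixes f :: "nat set \<Rightarrow> real"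
  assumes i: "i < n" and r: "0 < r" "r \<le> p i" "p i \<le> 1 - r"
    and m: "0 < m" and t: "0 < t" and B: "0 < B"
    and f_range: "\<And>S. S \<subseteq> {0..<n} \<Longrightarrow> 0 \<le> f S \<and> f S \<le> B"
  shows "measure_pmf.prob (samples_pmf m (prod_dist n p))
           {Ss. 4 * t / r < \<bar>mmc_estimate m Ss f i - expected_marginal n p f i\<bar>}
         \<le> 8 * B\<^sup>2 / (real m * t\<^sup>2) + 16 / (real m * r\<^sup>2)"
proof -
  let ?D = "prod_dist n p"
  let ?P = "samples_pmf m ?D"
  define \<mu>_in where "\<mu>_in = measure_pmf.expectation (cond_prod_dist n p i True) f"
  define \<mu>_out where "\<mu>_out = measure_pmf.expectation (cond_prod_dist n p i False) f"
  have \<mu>_range: "0 \<le> \<mu> \<and> \<mu> \<le> B" if "\<mu> = measure_pmf.expectation (cond_prod_dist n p i b) f" for \<mu> b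
    unfolding that using f_range set_cond_prod_dist(1)[OF i]
    by (auto intro!: measure_pmf.integral_ge_const measure_pmf.integral_le_const
        integrable_measure_pmf_finite finite_set_cond_prod_dist simp: AE_measure_pmf_iff)
  have p: "0 \<le> p i" "p i \<le> 1"
    using r by auto
  define g_in where "g_in S = (if i \<in> S then f S - \<mu>_in else 0)" for S
  define g_out where "g_out S = (if i \<in> S then 0 else f S - \<mu>_out)" for S
  define g_count where "g_count S = of_bool (i \<in> S) - p i" for S
  have mean_zero: "measure_pmf.expectation ?D g = 0" if "g \<in> {g_in, g_out, g_count}" for g
    using that expectation_prod_dist_centred(1,2)[where p = p and F = f, OF i p]
      expectation_prod_dist_centred(3)[where p = p, OF i p]
    unfolding g_in_def g_out_def g_count_def \<mu>_in_def \<mu>_out_def by auto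
  have bounded: "\<bar>g_in S\<bar> \<le> B" "\<bar>g_out S\<bar> \<le> B" "\<bar>g_count S\<bar> \<le> 1" if "S \<in> set_pmf ?D" for S
    using f_range[OF set_prod_dist[OF that]] \<mu>_range[OF \<mu>_in_def] \<mu>_range[OF \<mu>_out_def] p
    by (auto simp: g_in_def g_out_def g_count_def)
  let ?dev = "\<lambda>g s. {Ss. s \<le> \<bar>\<Sum>j\<in>{0..<m}. g (Ss j)\<bar>}"
  define E_in where "E_in = ?dev g_in (real m * t)"
  define E_out where "E_out = ?dev g_out (real m * t)"
  define E_count where "E_count = ?dev g_count (real m * r / 2)"
  have "Ss \<in> E_in \<union> E_out \<union> E_count"
    if far: "4 * t / r < \<bar>mmc_estimate m Ss f i - expected_marginal n p f i\<bar>" for Ss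
  proof (rule ccontr)
    assume "Ss \<notin> E_in \<union> E_out \<union> E_count"
    then have "\<bar>mmc_estimate m Ss f i - (\<mu>_in - \<mu>_out)\<bar> \<le> 4 * t / r"
      unfolding E_in_def E_out_def E_count_def g_in_def g_out_def g_count_def
      by (intro mmc_estimate_close[OF r _ _ _ m]) auto
    then show False
      using far unfolding expected_marginal_def \<mu>_in_def \<mu>_out_def by simp
  qed
  then have "measure_pmf.prob ?P {Ss. 4 * t / r < \<bar>mmc_estimate m Ss f i - expected_marginal n p f i\<bar>}
      \<le> measure_pmf.prob ?P (E_in \<union> E_out \<union> E_count)"
    by (intro measure_pmf.finite_measure_mono) auto
  also have "\<dots> \<le> measure_pmf.prob ?P (E_in \<union> E_out) + measure_pmf.prob ?P E_count"
    by (intro measure_Un_le) auto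
  also have "\<dots> \<le> measure_pmf.prob ?P E_in + measure_pmf.prob ?P E_out + measure_pmf.prob ?P E_count"
    using measure_Un_le[of E_in ?P E_out] by simp
  also have "\<dots> \<le> 4 * real m * B\<^sup>2 / (real m * t)\<^sup>2 + 4 * real m * B\<^sup>2 / (real m * t)\<^sup>2
         + 4 * real m * 1\<^sup>2 / (real m * r / 2)\<^sup>2"
    unfolding samples_pmf_def E_in_def E_out_def E_count_def using m t r B bounded mean_zero
    by (intro add_mono prob_iid_sum_deviation) auto
  also have "\<dots> = 8 * B\<^sup>2 / (real m * t\<^sup>2) + 16 / (real m * r\<^sup>2)"
    using m by (simp add: power2_eq_square field_simps)
  finally show ?thesis .
qed

lemma prob_mmc_estimates_accurate:
  fixes f :: "nat set \<Rightarrow> real"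
  assumes r: "0 < r" "\<And>i. i < n \<Longrightarrow> r \<le> p i \<and> p i \<le> 1 - r"
    and m: "0 < m" and t: "0 < t" and B: "0 < B"
    and f_range: "\<And>S. S \<subseteq> {0..<n} \<Longrightarrow> 0 \<le> f S \<and> f S \<le> B"
  shows "1 - real n * (8 * B\<^sup>2 / (real m * t\<^sup>2) + 16 / (real m * r\<^sup>2))
         \<le> measure_pmf.prob (samples_pmf m (prod_dist n p))
              {Ss. \<forall>i<n. \<bar>mmc_estimate m Ss f i - expected_marginal n p f i\<bar> \<le> 4 * t / r}"
proof -
  let ?P = "samples_pmf m (prod_dist n p)"
  define far where "far i = {Ss. 4 * t / r < \<bar>mmc_estimate m Ss f i - expected_marginal n p f i\<bar>}" for i
  have "measure_pmf.prob ?P (\<Union>i\<in>{0..<n}. far i) \<le> (\<Sum>i\<in>{0..<n}. measure_pmf.prob ?P (far i))"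
    by (intro measure_pmf.finite_measure_subadditive_finite) auto
  also have "\<dots> \<le> (\<Sum>i\<in>{0..<n}. 8 * B\<^sup>2 / (real m * t\<^sup>2) + 16 / (real m * r\<^sup>2))"
    unfolding far_def using r m t B f_range by (intro sum_mono prob_mmc_estimate_far) auto
  finally have "measure_pmf.prob ?P (\<Union>i\<in>{0..<n}. far i)
      \<le> real n * (8 * B\<^sup>2 / (real m * t\<^sup>2) + 16 / (real m * r\<^sup>2))"
    by simp
  moreover have "{Ss. \<forall>i<n. \<bar>mmc_estimate m Ss f i - expected_marginal n p f i\<bar> \<le> 4 * t / r}
      = space ?P - (\<Union>i\<in>{0..<n}. far i)"
    by (auto simp: far_def not_less) (meson not_less)
  ultimately show ?thesis
    using measure_pmf.prob_compl[of "\<Union>i\<in>{0..<n}. far i" ?P] by simp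
qed

lemma inverse_square_powr_le_power:
  fixes x a :: real
  assumes "1 \<le> x" "a \<le> real A"
  shows "1 / (x powr - a)\<^sup>2 \<le> x ^ (2 * A)"
proof -
  have "(x powr - a)\<^sup>2 = x powr (- (2 * a))"
    by (simp add: power2_eq_square flip: powr_add)
  then have "1 / (x powr - a)\<^sup>2 = x powr (2 * a)"
    by (simp add: powr_minus divide_inverse)
  also have "\<dots> \<le> x powr real (2 * A)"
    using assms by (intro powr_mono) auto
  also have "\<dots> = x ^ (2 * A)"
    using assms by (intro powr_realpow) auto
  finally show ?thesis .
qed

lemma failure_bound_le:
  fixes n m A :: nat and r \<delta> :: real
  assumes n: "1 \<le> n" and r: "0 < r" "1 / r\<^sup>2 \<le> real n ^ (2 * A)"
    and m: "real n ^ (8 + 2 * A) \<le> real m" and \<delta>: "0 < \<delta>" "528 / \<delta> \<le> real n"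
  shows "real n * (512 * real n ^ 6 + 16) / (real m * r\<^sup>2) \<le> \<delta>"
proof -
  define x where "x = real n"
  have x: "1 \<le> x"
    using n by (simp add: x_def)
  have pow7: "x ^ 7 = x * x ^ 6" and pow8: "x ^ (8 + 2 * A) = x * (x ^ 7 * x ^ (2 * A))"
    by (simp_all add: eval_nat_numeral power_add)
  have "0 < x ^ (8 + 2 * A)"
    using x by simp
  then have m_pos: "0 < real m"
    using m unfolding x_def by linarith
  have "x * (512 * x ^ 6 + 16) \<le> 528 * x ^ 7"
    using x self_le_power[of x 7] by (simp add: pow7 distrib_left)
  then have "x * (512 * x ^ 6 + 16) / (real m * r\<^sup>2) \<le> 528 * x ^ 7 * (1 / r\<^sup>2) / real m"
    using m_pos r by (simp add: divide_right_mono mult.commute)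
  also have "\<dots> \<le> 528 * x ^ 7 * x ^ (2 * A) / x ^ (8 + 2 * A)"
    using r m m_pos x by (intro frac_le mult_left_mono) (auto simp: x_def)
  also have "\<dots> = 528 / x"
    using x by (simp add: pow8)
  also have "\<dots> \<le> \<delta>"
    using \<delta> x by (simp add: x_def field_simps)
  finally show ?thesis
    by (simp add: x_def)
qed

lemma Max_singleton_le_opt_val:
  assumes "0 < k" "k \<le> n"
  shows "Max ((\<lambda>i. f {i}) ` {0..<n}) \<le> opt_val n k f"
proof -
  have "Max ((\<lambda>i. f {i}) ` {0..<n}) \<in> (\<lambda>i. f {i}) ` {0..<n}"
    using assms by (intro Max_in) auto
  then show ?thesis
    using assms by (auto intro!: le_opt_val)
qed

lemma set_fun_le_Max_singleton:
  assumes f0: "f {} = 0" and mo: "monotone_set_fun n f" and sm: "submodular_set_fun n f"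
    and S: "S \<subseteq> {0..<n}"
  shows "f S \<le> real n * Max ((\<lambda>i. f {i}) ` {0..<n})"
proof (cases "n = 0")
  case True
  then show ?thesis
    using S f0 by simp
next
  case False
  let ?M = "Max ((\<lambda>i. f {i}) ` {0..<n})"
  have singleton_le_M: "f {i} \<le> ?M" if "i < n" for i
    using that by (intro Max_ge) auto
  have "0 \<le> f {0}"
    using False set_fun_nonneg[OF f0 mo, of "{0}"] by simp
  then have "0 \<le> ?M"
    using singleton_le_M[of 0] False by linarith
  have "f S \<le> (\<Sum>i\<in>S. f {i})"
    by (rule set_fun_le_sum_singletons[OF f0 sm S])
  also have "\<dots> \<le> (\<Sum>i\<in>S. ?M)"
    using singleton_le_M S by (intro sum_mono) auto
  also have "\<dots> \<le> real n * ?M"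
    using S \<open>0 \<le> ?M\<close> card_mono[OF _ S] by (simp add: mult_right_mono)
  finally show ?thesis .
qed

lemma mmc_outputs_approx_if_accurate:
  fixes f :: "nat set \<Rightarrow> real"
  assumes f0: "f {} = 0" and mo: "monotone_set_fun n f" and sm: "submodular_set_fun n f"
    and k: "0 < k" "k \<le> n"
    and accurate: "\<forall>i<n. \<bar>mmc_estimate m Ss f i - expected_marginal n p f i\<bar> \<le> \<eta>"
    and \<eta>: "2 * real n * \<eta> \<le> \<epsilon> * opt_val n k f"
    and S: "S \<in> mmc_outputs n k m Ss f"
  shows "((1 - curvature n f)\<^sup>2 - \<epsilon>) * opt_val n k f \<le> f S"
proof -
  have S': "S \<subseteq> {0..<n}" "card S = k"
    "\<And>T. T \<subseteq> {0..<n} \<Longrightarrow> card T = k \<Longrightarrow>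
       (\<Sum>i\<in>T. mmc_estimate m Ss f i) \<le> (\<Sum>i\<in>S. mmc_estimate m Ss f i)"
    using S unfolding mmc_outputs_def by auto
  have "(1 - curvature n f)\<^sup>2 * opt_val n k f - 2 * real k * \<eta> \<le> f S"
    using expected_marginal_bounds[OF f0 mo sm] accurate
    by (intro perturbed_argmax_approx[where v = "expected_marginal n p f", OF f0 mo sm k _ _ S'])
      auto
  moreover have "2 * real k * \<eta> \<le> 2 * real n * \<eta>"
    using k accurate by (intro mult_right_mono) force+
  ultimately show ?thesis
    using \<eta> by (simp add: left_diff_distrib)
qed

lemma mmc_succeeds_whp:
  fixes f :: "nat set \<Rightarrow> real"
  assumes f0: "f {} = 0" and mo: "monotone_set_fun n f" and sm: "submodular_set_fun n f"
    and k: "0 < k" "k \<le> n"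
    and p: "\<forall>i<n. real n powr (-a) \<le> p i \<and> p i \<le> 1 - real n powr (-a)"
    and A: "a \<le> real A" and m: "n ^ (8 + 2 * A) \<le> m"
    and \<delta>: "0 < \<delta>" "528 / \<delta> \<le> real n"
    and nonzero: "\<exists>i<n. 0 < f {i}"
  shows "1 - \<delta> \<le> measure_pmf.prob (samples_pmf m (prod_dist n p))
           {Ss. \<forall>S \<in> mmc_outputs n k m Ss f.
                  card S = k \<and> ((1 - curvature n f)\<^sup>2 - 1 / real n) * opt_val n k f \<le> f S}"
proof -
  have n: "1 \<le> n"
    using k by simp
  then have "1 \<le> n ^ (8 + 2 * A)"
    by simp
  then have m_pos: "0 < m"
    using m by simp
  define r where "r = real n powr (-a)"
  define M where "M = Max ((\<lambda>i. f {i}) ` {0..<n})"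
  define t where "t = M * r / (8 * real n ^ 2)"
  \<comment> \<open>so that the accuracy \<open>4 t / r\<close> of the estimates is \<open>M / (2 n\<^sup>2)\<close>\<close>
  have M_pos: "0 < M"
    using nonzero unfolding M_def by (subst Max_gr_iff) auto
  have r_pos: "0 < r" and t_pos: "0 < t"
    using n M_pos by (simp_all add: r_def t_def)
  have "1 - \<delta> \<le> 1 - real n * (8 * (real n * M)\<^sup>2 / (real m * t\<^sup>2) + 16 / (real m * r\<^sup>2))"
  proof -
    have "real n * (8 * (real n * M)\<^sup>2 / (real m * t\<^sup>2) + 16 / (real m * r\<^sup>2))
        = real n * (512 * real n ^ 6 + 16) / (real m * r\<^sup>2)"
      using M_pos r_pos n by (simp add: t_def field_simps eval_nat_numeral add_divide_distrib)
    also have "\<dots> \<le> \<delta>"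
      using n r_pos \<delta> m inverse_square_powr_le_power[of "real n" a A] A
      by (intro failure_bound_le) (auto simp: r_def simp flip: of_nat_power)
    finally show ?thesis
      by simp
  qed
  also have "\<dots> \<le> measure_pmf.prob (samples_pmf m (prod_dist n p))
      {Ss. \<forall>i<n. \<bar>mmc_estimate m Ss f i - expected_marginal n p f i\<bar> \<le> 4 * t / r}"
    using p r_pos m_pos t_pos M_pos n set_fun_nonneg[OF f0 mo]
      set_fun_le_Max_singleton[OF f0 mo sm]
    by (intro prob_mmc_estimates_accurate) (auto simp: r_def M_def)
  also have "\<dots> \<le> measure_pmf.prob (samples_pmf m (prod_dist n p))
      {Ss. \<forall>S \<in> mmc_outputs n k m Ss f.
         card S = k \<and> ((1 - curvature n f)\<^sup>2 - 1 / real n) * opt_val n k f \<le> f S}"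
  proof (intro measure_pmf.finite_measure_mono subsetI, clarsimp)
    fix Ss S
    assume "\<forall>i<n. \<bar>mmc_estimate m Ss f i - expected_marginal n p f i\<bar> \<le> 4 * t / r"
      and "S \<in> mmc_outputs n k m Ss f"
    moreover have "2 * real n * (4 * t / r) \<le> 1 / real n * opt_val n k f"
      using n r_pos Max_singleton_le_opt_val[OF k, of f]
      by (simp add: t_def M_def field_simps power2_eq_square)
    ultimately show "card S = k \<and> ((1 - curvature n f)\<^sup>2 - 1 / real n) * opt_val n k f \<le> f S"
      using mmc_outputs_approx_if_accurate[OF f0 mo sm k] by (auto simp: mmc_outputs_def)
  qed simp
  finally show ?thesis .
qed

lemma opt_val_nonneg:
  assumes "f {} = 0"
  shows "0 \<le> opt_val n k f"
  using le_opt_val[of "{}" n k f] assms by simp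

lemma opt_val_eq_zero:
  assumes f0: "f {} = 0" and mo: "monotone_set_fun n f" and sm: "submodular_set_fun n f"
    and k: "k \<le> n" and degenerate: "k = 0 \<or> (\<forall>i<n. f {i} = 0)"
  shows "opt_val n k f = 0"
proof -
  obtain T where T: "T \<subseteq> {0..<n}" "card T \<le> k" "f T = opt_val n k f"
    using opt_val_attained[OF k] .
  have "f T \<le> (\<Sum>i\<in>T. f {i})"
    by (rule set_fun_le_sum_singletons[OF f0 sm T(1)])
  moreover have "(\<Sum>i\<in>T. f {i}) = 0"
    using degenerate T(1,2) finite_subset[OF T(1)] by (auto intro!: sum.neutral)
  ultimately show ?thesis
    using T(3) opt_val_nonneg[of f n k] f0 by simp
qed

text \<open>The constant \<open>528 = 512 + 16\<close> comes from \<open>failure_bound_le\<close>; below the threshold the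
  guarantee with error \<open>1\<close> holds trivially because \<open>(1 - c)\<^sup>2 \<le> 1\<close>.\<close>

definition mmc_error :: "real \<Rightarrow> nat \<Rightarrow> real" where
  "mmc_error \<delta> n = (if real n < 528 / \<delta> then 1 else 1 / real n)"

lemma mmc_error_tendsto_zero: "mmc_error \<delta> \<longlonglongrightarrow> 0"
proof (rule Lim_transform_eventually[OF lim_inverse_n'])
  show "\<forall>\<^sub>F n in sequentially. 1 / real n = mmc_error \<delta> n"
    unfolding eventually_sequentially mmc_error_def
    by (intro exI[of _ "nat \<lceil>528 / \<delta>\<rceil>"]) (auto dest!: nat_ceiling_le_eq[THEN iffD1])
qed

lemma mmc_success_probability:
  fixes f :: "nat set \<Rightarrow> real"
  assumes f0: "f {} = 0" and mo: "monotone_set_fun n f" and sm: "submodular_set_fun n f"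
    and k: "k \<le> n"
    and p: "\<forall>i<n. real n powr (-a) \<le> p i \<and> p i \<le> 1 - real n powr (-a)"
    and A: "a \<le> real A" and m: "n ^ (8 + 2 * A) \<le> m" and \<delta>: "0 < \<delta>"
  shows "1 - \<delta> \<le> measure_pmf.prob (samples_pmf m (prod_dist n p))
           {Ss. \<forall>S \<in> mmc_outputs n k m Ss f.
                  card S = k \<and> ((1 - curvature n f)\<^sup>2 - mmc_error \<delta> n) * opt_val n k f \<le> f S}"
proof (cases "k = 0 \<or> (\<forall>i<n. f {i} = 0) \<or> real n < 528 / \<delta>")
  case True
  have "((1 - curvature n f)\<^sup>2 - mmc_error \<delta> n) * opt_val n k f \<le> f S" if "S \<subseteq> {0..<n}" for S
  proof (cases "k = 0 \<or> (\<forall>i<n. f {i} = 0)")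
    case True
    then show ?thesis
      using opt_val_eq_zero[OF f0 mo sm k] set_fun_nonneg[OF f0 mo that] by simp
  next
    case False
    then have "0 < n" "mmc_error \<delta> n = 1"
      using \<open>k = 0 \<or> _\<close> k by (auto simp: mmc_error_def)
    then have "(1 - curvature n f)\<^sup>2 - mmc_error \<delta> n \<le> 0"
      using curvature_nonneg[of f n] curvature_le_one[OF f0 mo] f0 by (simp add: power_le_one)
    then show ?thesis
      using opt_val_nonneg[of f n k] f0 set_fun_nonneg[OF f0 mo that]
      by (meson mult_nonpos_nonneg order_trans)
  qed
  then have "{Ss. \<forall>S \<in> mmc_outputs n k m Ss f.
      card S = k \<and> ((1 - curvature n f)\<^sup>2 - mmc_error \<delta> n) * opt_val n k f \<le> f S} = UNIV"
    by (auto simp: mmc_outputs_def)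
  then show ?thesis
    using \<delta> by simp
next
  case False
  then have "0 < k" "528 / \<delta> \<le> real n" "mmc_error \<delta> n = 1 / real n"
    by (auto simp: mmc_error_def)
  moreover obtain i where "i < n" "f {i} \<noteq> 0"
    using False by blast
  then have "\<exists>i<n. 0 < f {i}"
    using set_fun_nonneg[OF f0 mo, of "{i}"] by (auto intro!: exI[of _ i])
  ultimately show ?thesis
    using mmc_succeeds_whp[OF f0 mo sm _ k p A m \<delta>] by simp
qed

theorem theorem4:
  fixes a \<delta> :: real
  assumes "a \<ge> 0" and "0 < \<delta>" and "\<delta> < 1"
  shows "\<exists>(b::nat) (\<epsilon>::nat \<Rightarrow> real). \<epsilon> \<longlonglongrightarrow> 0 \<and>
    (\<forall>n k (f::nat set \<Rightarrow> real) (p::nat \<Rightarrow> real) m.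
       k \<le> n \<and> f {} = 0 \<and> monotone_set_fun n f \<and> submodular_set_fun n f \<and>
       (\<forall>i<n. real n powr (-a) \<le> p i \<and> p i \<le> 1 - real n powr (-a)) \<and>
       m \<ge> n ^ b
       \<longrightarrow> measure_pmf.prob (samples_pmf m (prod_dist n p))
             {Ss. \<forall>S \<in> mmc_outputs n k m Ss f.
                    card S = k \<and>
                    f S \<ge> ((1 - curvature n f)\<^sup>2 - \<epsilon> n) * opt_val n k f}
           \<ge> 1 - \<delta>)"
proof -
  define A where "A = nat \<lceil>a\<rceil>"
  have A: "a \<le> real A"
    unfolding A_def by linarith
  show ?thesis
  proof (intro exI[of _ "8 + 2 * A"] exI[of _ "mmc_error \<delta>"] conjI allI impI)
    show "mmc_error \<delta> \<longlonglongrightarrow> 0"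
      by (rule mmc_error_tendsto_zero)
  next
    fix n k m and f :: "nat set \<Rightarrow> real" and p :: "nat \<Rightarrow> real"
    assume "k \<le> n \<and> f {} = 0 \<and> monotone_set_fun n f \<and> submodular_set_fun n f \<and>
      (\<forall>i<n. real n powr (-a) \<le> p i \<and> p i \<le> 1 - real n powr (-a)) \<and> n ^ (8 + 2 * A) \<le> m"
    then show "1 - \<delta> \<le> measure_pmf.prob (samples_pmf m (prod_dist n p))
        {Ss. \<forall>S \<in> mmc_outputs n k m Ss f.
               card S = k \<and> ((1 - curvature n f)\<^sup>2 - mmc_error \<delta> n) * opt_val n k f \<le> f S}"
      using mmc_success_probability[OF _ _ _ _ _ A _ \<open>0 < \<delta>\<close>] by blast
  qed
qed

end
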